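(* Let $q$ and $p_0,p_1,\dots,p_N$ be palindromic Laurent polynomials in $\mathbb{R}[t,t^{-1}]$ with $q=\sum_{\ell=0}^{N}p_\ell t^\ell$, and assume that for every $\ell>0$ all coefficients of $p_\ell$ are non-negative. Then $p_\ell=0$ for all $\ell>0$; in particular $q=p_0$.
   Context: A Laurent polynomial $p\in\mathbb{R}[t,t^{-1}]$ is palindromic if $p(t)=p(t^{-1})$. *)

theory Defs
  imports "HOL-Computational_Algebra.Formal_Laurent_Series"
begin

text \<open>Laurent polynomials in R[t,t^-1] are represented as formal Laurent series
  (type real fls, variable fls_X = t) with finitely many nonzero coefficients.\<close>

definition laurent_poly :: "real fls \<Rightarrow> bool" where
  "laurent_poly p \<longleftrightarrow> finite {k. fls_nth p k \<noteq> 0}"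

definition palindromic :: "real fls \<Rightarrow> bool" where
  "palindromic p \<longleftrightarrow> (\<forall>k. fls_nth p k = fls_nth p (-k))"

end

theory Submission
  imports Defs "HOL-Library.Groups_Big_Fun"
begin

text \<open>Differentiate q = \<Sum>l p_l t^l at t = 1: a palindromic Laurent polynomial has vanishing
  derivative at 1, since its coefficients of t^k and t^-k cancel in \<Sum>k k c_k. Hence
  0 = q'(1) = \<Sum>l (p_l'(1) + l p_l(1)) = \<Sum>l l p_l(1). For l > 0 the terms l p_l(1) are sums of
  non-negative coefficients, so they all vanish, which forces p_l = 0.\<close>

text \<open>Value and derivative at t = 1 of a Laurent polynomial \<Sum>k c_k t^k, namely \<Sum>k c_k and
  \<Sum>k k c_k; for infinite support both sums default to 0.\<close>

definition fls_at_one :: "'a::comm_monoid_add fls \<Rightarrow> 'a" where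
  "fls_at_one f = Sum_any (\<lambda>k. fls_nth f k)"

definition fls_deriv_at_one :: "'a::ring_1 fls \<Rightarrow> 'a" where
  "fls_deriv_at_one f = Sum_any (\<lambda>k. of_int k * fls_nth f k)"

lemma Sum_any_uminus:
  fixes g :: "'b \<Rightarrow> 'a::ab_group_add"
  shows "Sum_any (\<lambda>k. - g k) = - Sum_any (\<lambda>k. g k)"
  by (simp add: Sum_any.expand_set sum_negf)

lemma Sum_any_sum_swap:
  fixes g :: "'b \<Rightarrow> 'c \<Rightarrow> 'a::comm_monoid_add"
  assumes "finite A" and "\<And>a. a \<in> A \<Longrightarrow> finite {k. g a k \<noteq> 0}"
  shows "Sum_any (\<lambda>k. \<Sum>a\<in>A. g a k) = (\<Sum>a\<in>A. Sum_any (g a))"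
proof -
  define C where "C = (\<Union>a\<in>A. {k. g a k \<noteq> 0})"
  have "finite C"
    using assms by (simp add: C_def)
  have "Sum_any (\<lambda>k. \<Sum>a\<in>A. g a k) = (\<Sum>k\<in>C. \<Sum>a\<in>A. g a k)"
    using \<open>finite C\<close> by (rule Sum_any.expand_superset) (auto simp: C_def intro: ccontr)
  also have "\<dots> = (\<Sum>a\<in>A. \<Sum>k\<in>C. g a k)"
    by (rule sum.swap)
  also have "\<dots> = (\<Sum>a\<in>A. Sum_any (g a))"
    using \<open>finite C\<close> by (intro sum.cong refl Sum_any.expand_superset[symmetric]) (auto simp: C_def)
  finally show ?thesis .
qed

lemma finite_support_fls_mult_X_power:
  assumes "finite {k. fls_nth f k \<noteq> 0}"
  shows "finite {k. fls_nth (f * fls_X ^ n) k \<noteq> 0}"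
proof -
  have "{k. fls_nth (f * fls_X ^ n) k \<noteq> 0} = (\<lambda>k. k + int n) ` {k. fls_nth f k \<noteq> 0}"
    by (force simp: fls_X_power_times_conv_shift image_iff)
  then show ?thesis
    using assms by simp
qed

lemma fls_at_one_eq_0_iff_nonneg:
  fixes f :: "'a::ordered_comm_monoid_add fls"
  assumes "finite {k. fls_nth f k \<noteq> 0}" and "\<And>k. fls_nth f k \<ge> 0"
  shows "fls_at_one f = 0 \<longleftrightarrow> f = 0"
  using assms by (auto simp: fls_at_one_def Sum_any.expand_set sum_nonneg_eq_0_iff intro: fls_eqI)

lemma fls_deriv_at_one_palindromic:
  assumes "palindromic f"
  shows "fls_deriv_at_one f = 0"
proof -
  have "fls_deriv_at_one f = Sum_any (\<lambda>k. of_int (- k) * fls_nth f (- k))"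
    unfolding fls_deriv_at_one_def by (rule Sum_any.reindex_cong[of uminus]) (auto simp: bij_def)
  also have "\<dots> = - fls_deriv_at_one f"
    using assms by (simp add: palindromic_def fls_deriv_at_one_def Sum_any_uminus[symmetric])
  finally show ?thesis
    by simp
qed

lemma fls_deriv_at_one_mult_X_power:
  fixes f :: "'a::comm_ring_1 fls"
  assumes "finite {k. fls_nth f k \<noteq> 0}"
  shows "fls_deriv_at_one (f * fls_X ^ n) = fls_deriv_at_one f + of_nat n * fls_at_one f"
proof -
  have "fls_deriv_at_one (f * fls_X ^ n) = Sum_any (\<lambda>k. of_int (k + int n) * fls_nth f k)"
    unfolding fls_deriv_at_one_def
    by (rule Sum_any.reindex_cong[of "\<lambda>k. k + int n"])
       (auto simp: bij_def fls_X_power_times_conv_shift inj_on_def image_iff intro: exI[of _ "_ - int n"])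
  also have "\<dots> = Sum_any (\<lambda>k. of_int k * fls_nth f k + of_nat n * fls_nth f k)"
    by (simp add: algebra_simps)
  also have "\<dots> = fls_deriv_at_one f + of_nat n * fls_at_one f"
    unfolding fls_deriv_at_one_def fls_at_one_def
    using assms by (subst Sum_any.distrib) (auto simp: Sum_any_right_distrib elim: rev_finite_subset)
  finally show ?thesis .
qed

lemma fls_deriv_at_one_sum:
  assumes "finite A" and "\<And>a. a \<in> A \<Longrightarrow> finite {k. fls_nth (f a) k \<noteq> 0}"
  shows "fls_deriv_at_one (\<Sum>a\<in>A. f a) = (\<Sum>a\<in>A. fls_deriv_at_one (f a))"
proof -
  have "finite {k. of_int k * fls_nth (f a) k \<noteq> 0}" if "a \<in> A" for a
    by (rule finite_subset[OF _ assms(2)[OF that]]) auto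
  with assms(1) show ?thesis
    unfolding fls_deriv_at_one_def fls_nth_sum sum_distrib_left by (rule Sum_any_sum_swap)
qed

theorem lemma6p4:
  fixes q :: "real fls" and p :: "nat \<Rightarrow> real fls" and N :: nat
  assumes "laurent_poly q" and "palindromic q"
    and "\<forall>l\<le>N. laurent_poly (p l)" and "\<forall>l\<le>N. palindromic (p l)"
    and "q = (\<Sum>l\<le>N. p l * fls_X ^ l)"
    and "\<forall>l\<in>{1..N}. \<forall>k. fls_nth (p l) k \<ge> 0"
  shows "(\<forall>l\<in>{1..N}. p l = 0) \<and> q = p 0"
proof -
  have finite_p: "finite {k. fls_nth (p l) k \<noteq> 0}" if "l \<le> N" for l
    using assms(3) that by (simp add: laurent_poly_def)
  have "0 = fls_deriv_at_one q"
    using assms(2) by (simp add: fls_deriv_at_one_palindromic)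
  also have "\<dots> = (\<Sum>l\<le>N. fls_deriv_at_one (p l * fls_X ^ l))"
    unfolding assms(5)
    by (rule fls_deriv_at_one_sum) (simp_all add: finite_support_fls_mult_X_power finite_p)
  also have "\<dots> = (\<Sum>l\<le>N. fls_deriv_at_one (p l) + of_nat l * fls_at_one (p l))"
    using finite_p by (simp add: fls_deriv_at_one_mult_X_power)
  also have "\<dots> = (\<Sum>l\<le>N. of_nat l * fls_at_one (p l))"
    using assms(4) by (simp add: fls_deriv_at_one_palindromic)
  finally have "(\<Sum>l\<le>N. of_nat l * fls_at_one (p l)) = 0" ..
  moreover have "of_nat l * fls_at_one (p l) \<ge> 0" if "l \<le> N" for l
    using assms(6) that by (cases "l = 0") (auto simp: fls_at_one_def Sum_any.expand_set sum_nonneg)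
  ultimately have "of_nat l * fls_at_one (p l) = 0" if "l \<le> N" for l
    using that by (subst (asm) sum_nonneg_eq_0_iff) auto
  then have "fls_at_one (p l) = 0" if "l \<in> {1..N}" for l
    using that by fastforce
  then have vanish: "\<forall>l\<in>{1..N}. p l = 0"
    using assms(6) finite_p by (auto simp: fls_at_one_eq_0_iff_nonneg)
  have "q = (\<Sum>l\<in>insert 0 {1..N}. p l * fls_X ^ l)"
    using assms(5) by (simp add: atLeast0AtMost[symmetric] atLeastAtMost_insertL)
  with vanish show ?thesis
    by simp
qed

end
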